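(* Let $X$ be a random vector in $\mathbb{R}^d$ with $\mathbb{E}\bigl(\lVert X \rVert^2\bigr) < \infty$ and mean $m = \mathbb{E}(X)$, and let $X_1, \dots, X_n$ be $n$ independent copies of $X$. Let $\lambda, \mu, \beta > 0$ and $\delta \in (0,1)$. Define $Y_i = \frac{\psi(\lambda \lVert X_i \rVert)}{\lambda \lVert X_i \rVert} X_i$, where $\psi(t) = \min\{t,1\}$ for $t \geq 0$, and $\widehat{m} = \frac{1}{n}\sum_{i=1}^n Y_i$. Let $a = g_2(2\mu)$ and let $b$ be any real number with $b \geq \exp(2\mu)\, g_1\bigl( 2\mu^2/\beta \bigr)$. Then with probability at least $1 - \delta$, for any $\theta \in \mathbb{S}_d = \{\theta \in \mathbb{R}^d : \lVert \theta \rVert = 1\}$, \begin{multline*} \langle \theta, \widehat{m} - m \rangle \leq \frac{a \mu \lambda}{2} \mathbb{E}\bigl( \langle \theta, X - m \rangle^2 \bigr) + \frac{b \mu \lambda}{2 \beta} \mathbb{E}\bigl( \lVert X - m \rVert^2 \bigr) + \frac{\beta + 2 \log(\delta^{-1})}{2 \mu \lambda n} \\ + \inf_{p \geq 1} \frac{\lambda^p}{p+1}\biggl( \frac{p}{p+1} \biggr)^p \mathbb{E}\bigl( \lVert X \rVert^p \langle \theta, X - m \rangle_- \bigr) \\ + \inf_{p \geq 2} \frac{\lambda^p}{p+1}\biggl( \frac{p}{p+1} \biggr)^p \mathbb{E}\bigl( \lVert X \rVert^p \bigr) \Biggl( \langle \theta, m \rangle_- + \frac{a \mu \lambda}{2}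 \langle \theta, m \rangle^2 \Biggr), \end{multline*} where the infima are over real $p$.
   Context: $\lVert \cdot \rVert$ and $\langle \cdot, \cdot \rangle$ are the Euclidean norm and inner product on $\mathbb{R}^d$. For $r \in \mathbb{R}$, $r_- = \max\{0, -r\}$. The functions $g_1(t) = \frac{1}{t}(\exp(t) - 1)$ and $g_2(t) = \frac{2}{t^2}(\exp(t) - 1 - t)$, $t \in \mathbb{R}$, are extended by continuity at $t = 0$ with $g_1(0) = g_2(0) = 1$. The factor $\frac{\psi(\lambda \lVert x \rVert)}{\lambda \lVert x \rVert}$ is taken to be $1$ when $x = 0$, so that $Y_i$ is the projection of $X_i$ onto the closed ball of radius $1/\lambda$ centred at $0$. *)

theory Defs
  imports "HOL-Probability.Probability"
begin

definition psi :: "real \<Rightarrow> real" where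
  "psi t = min t 1"

definition g1 :: "real \<Rightarrow> real" where
  "g1 t = (if t = 0 then 1 else (exp t - 1) / t)"

definition g2 :: "real \<Rightarrow> real" where
  "g2 t = (if t = 0 then 1 else 2 / t^2 * (exp t - 1 - t))"

text \<open>Thresholded version of a vector: projection onto the closed ball of radius 1/lambda.\<close>
definition thresh :: "real \<Rightarrow> 'd::real_normed_vector \<Rightarrow> 'd" where
  "thresh lam x = (if x = 0 then x else (psi (lam * norm x) / (lam * norm x)) *\<^sub>R x)"

definition neg_part :: "real \<Rightarrow> real" where
  "neg_part r = max 0 (- r)"

end

(* The estimator averages the projections Y_i of the X_i onto the ball of radius 1/lam, so
   every Y_i - E Y is bounded by 2/lam. A PAC-Bayes argument with the Gaussian prior
   N(0, beta^-1 I) and the posteriors N(theta, beta^-1 I), at Kullback-Leibler divergence beta/2,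
   bounds <theta, mean of the Y_i - E Y> simultaneously for all unit theta by an exponential
   moment of mu lam <theta, Y - E Y> plus a quadratic term, and the elementary inequality
   exp (u + v) <= 1 + u + g2 (2 mu) u^2/2 + b v for u <= 2 mu and 0 <= v <= 2 mu^2/beta turns
   that moment into variances. As the projection is 1-Lipschitz, the variances of Y are at most
   those of X, up to a term (1 - s) <theta, m>^2 with s the shrinkage factor, Y = s X. The bias
   <theta, E Y - m> is at most E ((1 - s) (<theta, X - m>_- + <theta, m>_-)), and
   1 - s <= lam^p |X|^p p^p / (p + 1)^(p + 1) for every p > 0 gives the two infima. *)

theory Submission
  imports Defs
begin

lemma one_minus_mult_powr_le:
  fixes s p :: real
  assumes s: "0 \<le> s" and p: "0 < p"
  shows "(1 - s) * s powr p \<le> (p / (p + 1)) powr p / (p + 1)"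
proof (cases "0 < s \<and> s < 1")
  case False
  with s have "(1 - s) * s powr p \<le> 0"
    by (cases "s = 0") (auto simp: mult_nonpos_nonneg)
  also have "0 \<le> (p / (p + 1)) powr p / (p + 1)" using p by simp
  finally show ?thesis .
next
  case True
  define A where "A = s * ((p + 1) / p)"
  define B where "B = (p + 1) * (1 - s)"
  have A: "A > 0" and B: "B > 0" using True p by (auto simp: A_def B_def)
  \<comment> \<open>weighted AM-GM; A = B = 1 exactly at the maximiser s = p/(p+1)\<close>
  have "A powr (p / (p + 1)) * B powr (1 / (p + 1)) \<le> p / (p + 1) * A + 1 / (p + 1) * B"
    using p A B by (intro Youngs_inequality_0) (auto simp: field_simps)
  also have "\<dots> = 1"
    using p by (simp add: A_def B_def)
  finally have "(A powr (p / (p + 1)) * B powr (1 / (p + 1))) powr (p + 1) \<le> 1"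
    using p by (intro powr_le1) simp_all
  moreover have "(A powr (p / (p + 1)) * B powr (1 / (p + 1))) powr (p + 1) = A powr p * B"
    using p A B by (simp add: powr_mult powr_powr)
  ultimately have AB: "A powr p * B \<le> 1" by simp
  have "A powr p = s powr p * ((p + 1) / p) powr p"
    unfolding A_def using True p by (intro powr_mult)
  moreover have "((p + 1) / p) powr p * (p / (p + 1)) powr p = 1"
    using p by (simp add: powr_mult[symmetric])
  ultimately have "A powr p * B * ((p / (p + 1)) powr p / (p + 1)) = (1 - s) * s powr p"
    using p by (simp add: B_def)
  then have "(1 - s) * s powr p = A powr p * B * ((p / (p + 1)) powr p / (p + 1))"
    by simp
  also have "\<dots> \<le> (p / (p + 1)) powr p / (p + 1)"
    using AB B p by (intro mult_left_le_one_le) auto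
  finally show ?thesis .
qed

lemma exp_le_quadratic_of_nonpos:
  fixes t :: real
  assumes "t \<le> 0"
  shows "exp t \<le> 1 + t + t\<^sup>2 / 2"
proof -
  have "1 + 0 + 0\<^sup>2 / 2 - exp 0 \<le> 1 + t + t\<^sup>2 / 2 - exp t"
  proof (rule DERIV_nonpos_imp_nonincreasing[OF assms, where f = "\<lambda>x. 1 + x + x\<^sup>2 / 2 - exp x"])
    fix x :: real
    show "\<exists>y. ((\<lambda>x. 1 + x + x\<^sup>2 / 2 - exp x) has_real_derivative y) (at x) \<and> y \<le> 0"
      by (rule exI[of _ "1 + x - exp x"]) (auto intro!: derivative_eq_intros)
  qed
  then show ?thesis by simp
qed

lemma exp_minus_one_minus_sums: "(\<lambda>n. x ^ (n + 2) / fact (n + 2)) sums (exp x - 1 - (x::real))"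
proof -
  have "(\<lambda>n. x ^ (n + 2) /\<^sub>R fact (n + 2)) sums (exp x - (\<Sum>i<2. x ^ i /\<^sub>R fact i))"
    by (rule sums_split_initial_segment[OF exp_converges])
  then show ?thesis
    by (simp add: divide_inverse_commute eval_nat_numeral mult.commute diff_diff_eq)
qed

lemma exp_minus_one_minus_scale_le:
  fixes s c :: real
  assumes "0 \<le> s" "s \<le> 1" "0 \<le> c"
  shows "exp (s * c) - 1 - s * c \<le> s\<^sup>2 * (exp c - 1 - c)"
proof (rule sums_le[OF _ exp_minus_one_minus_sums sums_mult[OF exp_minus_one_minus_sums]])
  fix n
  have "(s * c) ^ (n + 2) = s ^ n * s\<^sup>2 * c ^ (n + 2)"
    by (simp add: power_mult_distrib power_add mult_ac power2_eq_square)
  also have "\<dots> \<le> 1 * s\<^sup>2 * c ^ (n + 2)"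
    using assms by (intro mult_right_mono power_le_one) auto
  finally show "(s * c) ^ (n + 2) / fact (n + 2) \<le> s\<^sup>2 * (c ^ (n + 2) / fact (n + 2))"
    by (simp add: divide_right_mono)
qed

lemma g2_ge_1: "c \<ge> 0 \<Longrightarrow> g2 c \<ge> 1"
  using exp_lower_Taylor_quadratic[of c] by (auto simp: g2_def field_simps)

lemma g1_nonneg: "g1 t \<ge> 0"
  by (cases t "0::real" rule: linorder_cases) (auto simp: g1_def divide_nonpos_neg)

lemma exp_le_g2:
  fixes u c :: real
  assumes c: "c > 0" and u: "u \<le> c"
  shows "exp u \<le> 1 + u + g2 c * u\<^sup>2 / 2"
proof (cases "u \<le> 0")
  case True
  have "exp u \<le> 1 + u + 1 * u\<^sup>2 / 2" using exp_le_quadratic_of_nonpos[OF True] by simp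
  also have "\<dots> \<le> 1 + u + g2 c * u\<^sup>2 / 2"
    using g2_ge_1 c by (intro add_left_mono divide_right_mono mult_right_mono) auto
  finally show ?thesis .
next
  case False
  define s where "s = u / c"
  have s: "0 \<le> s" "s \<le> 1" and us: "u = s * c" using False u c by (auto simp: s_def field_simps)
  have "exp u - 1 - u \<le> s\<^sup>2 * (exp c - 1 - c)"
    using exp_minus_one_minus_scale_le[OF s] c us by simp
  also have "\<dots> = g2 c * u\<^sup>2 / 2"
    using c by (simp add: g2_def us field_simps power2_eq_square)
  finally show ?thesis by simp
qed

lemma exp_minus_one_le_g1:
  fixes v d :: real
  assumes d: "d > 0" and v: "0 \<le> v" "v \<le> d"
  shows "exp v - 1 \<le> v * g1 d"
proof -
  define s where "s = v / d"
  have s: "0 \<le> s" "s \<le> 1" and vs: "v = s * d" using v d by (auto simp: s_def field_simps)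
  have "exp ((1 - s) * 0 + s * d) \<le> (1 - s) * exp 0 + s * exp d"
    using convex_onD[OF exp_convex, of s 0 d] s by simp
  then have "exp v - 1 \<le> s * (exp d - 1)" by (simp add: vs algebra_simps)
  also have "\<dots> = v * g1 d" using d by (simp add: g1_def vs)
  finally show ?thesis .
qed

lemma exp_add_le_g2_g1:
  fixes u v c d b :: real
  assumes c: "c > 0" and u: "u \<le> c" and d: "d > 0" and v: "0 \<le> v" "v \<le> d"
    and b: "b \<ge> exp c * g1 d"
  shows "exp (u + v) \<le> 1 + u + g2 c * u\<^sup>2 / 2 + b * v"
proof -
  have "exp u * (exp v - 1) \<le> exp c * (v * g1 d)"
    using exp_minus_one_le_g1[OF d v] u v by (intro mult_mono) auto
  also have "\<dots> \<le> b * v"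
    using mult_right_mono[OF b v(1)] by (simp add: mult_ac)
  finally have "exp u * (exp v - 1) \<le> b * v" .
  moreover have "exp (u + v) = exp u + exp u * (exp v - 1)"
    by (simp add: exp_add algebra_simps)
  ultimately show ?thesis using exp_le_g2[OF c u] by linarith
qed

lemma borel_measurable_neg_part [measurable]: "neg_part \<in> borel_measurable borel"
  unfolding neg_part_def[abs_def] by measurable

lemma neg_part_nonneg: "0 \<le> neg_part r"
  by (simp add: neg_part_def)

lemma neg_mult_le_mult_neg_part: "0 \<le> c \<Longrightarrow> - (c * r) \<le> c * neg_part r"
  unfolding neg_part_def by (metis max.cobounded2 mult_left_mono mult_minus_right)

lemma power2_diff_mult_le:
  fixes s u w :: real
  assumes "0 \<le> s" "s \<le> 1"
  shows "(s * u - (1 - s) * w)\<^sup>2 \<le> u\<^sup>2 + (1 - s) * w\<^sup>2"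
proof -
  have "s * u\<^sup>2 + (1 - s) * w\<^sup>2 - (s * u - (1 - s) * w)\<^sup>2 = s * (1 - s) * (u + w)\<^sup>2"
    by (simp add: power2_eq_square algebra_simps)
  moreover have "0 \<le> s * (1 - s) * (u + w)\<^sup>2" using assms by simp
  moreover have "s * u\<^sup>2 \<le> u\<^sup>2" using assms by (simp add: mult_left_le_one_le)
  ultimately show ?thesis by linarith
qed

lemma power2_inner_le: "(x \<bullet> y)\<^sup>2 \<le> (norm x)\<^sup>2 * (norm y)\<^sup>2"
  by (simp add: Cauchy_Schwarz_ineq power2_norm_eq_inner)

section \<open>Thresholding\<close>

definition thresh_factor :: "real \<Rightarrow> 'a::real_normed_vector \<Rightarrow> real" where
  "thresh_factor lam x = (if lam * norm x \<le> 1 then 1 else 1 / (lam * norm x))"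

lemma thresh_eq_scaleR: "lam > 0 \<Longrightarrow> thresh lam x = thresh_factor lam x *\<^sub>R x"
  by (auto simp: thresh_def thresh_factor_def psi_def min_def)

lemma thresh_factor_nonneg: "0 \<le> thresh_factor lam x"
  by (auto simp: thresh_factor_def)

lemma thresh_factor_le_1: "thresh_factor lam x \<le> 1"
  by (auto simp: thresh_factor_def)

lemma borel_measurable_thresh_factor [measurable]:
  "(thresh_factor lam :: 'a::euclidean_space \<Rightarrow> real) \<in> borel_measurable borel"
  unfolding thresh_factor_def[abs_def] by measurable

lemma one_minus_thresh_factor_le:
  assumes lam: "lam > 0" and p: "p > 0"
  shows "1 - thresh_factor lam x \<le> lam powr p / (p + 1) * (p / (p + 1)) powr p * norm x powr p"
proof (cases "lam * norm x \<le> 1")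
  case True
  then show ?thesis using lam p by (simp add: thresh_factor_def)
next
  case False
  define t where "t = lam * norm x"
  have t: "t > 1" using False by (simp add: t_def)
  have "(1 - 1 / t) * (1 / t) powr p \<le> (p / (p + 1)) powr p / (p + 1)"
    using t p by (intro one_minus_mult_powr_le) auto
  then have "(1 - 1 / t) * (1 / t) powr p * t powr p \<le> (p / (p + 1)) powr p / (p + 1) * t powr p"
    by (rule mult_right_mono) simp
  moreover have "(1 / t) powr p * t powr p = 1"
    using t by (simp add: powr_divide)
  moreover have "t powr p = lam powr p * norm x powr p"
    using lam by (simp add: t_def powr_mult)
  ultimately have "1 - 1 / t \<le> (p / (p + 1)) powr p / (p + 1) * (lam powr p * norm x powr p)"
    by (metis mult.assoc mult_1_right)
  then show ?thesis
    using False by (simp add: thresh_factor_def t_def[symmetric] mult_ac)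
qed

lemma borel_measurable_thresh [measurable]:
  "(thresh lam :: 'a::euclidean_space \<Rightarrow> 'a) \<in> borel_measurable borel"
  unfolding thresh_def[abs_def] psi_def by measurable

lemma norm_thresh_le: "lam > 0 \<Longrightarrow> norm (thresh lam x) \<le> 1 / lam"
  by (auto simp: thresh_eq_scaleR thresh_factor_def field_simps)

lemma thresh_eq_closest_point:
  fixes x :: "'a::euclidean_space"
  assumes lam: "lam > 0"
  shows "thresh lam x = closest_point (cball 0 (1 / lam)) x"
proof (rule closest_point_unique)
  show "thresh lam x \<in> cball 0 (1 / lam)" using norm_thresh_le[OF lam] by simp
  show "\<forall>z\<in>cball 0 (1 / lam). dist x (thresh lam x) \<le> dist x z"
  proof
    fix z :: 'a assume z: "z \<in> cball 0 (1 / lam)"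
    show "dist x (thresh lam x) \<le> dist x z"
    proof (cases "lam * norm x \<le> 1")
      case True
      then show ?thesis using lam by (simp add: thresh_eq_scaleR thresh_factor_def)
    next
      case False
      have "x - thresh lam x = (1 - 1 / (lam * norm x)) *\<^sub>R x"
        using False lam by (simp add: thresh_eq_scaleR thresh_factor_def algebra_simps)
      then have "dist x (thresh lam x) = \<bar>1 - 1 / (lam * norm x)\<bar> * norm x"
        by (simp add: dist_norm)
      also have "\<dots> = norm x - 1 / lam"
        using False lam by (auto simp: field_simps abs_if)
      also have "\<dots> \<le> norm x - norm z" using z by simp
      also have "\<dots> \<le> dist x z" by (simp add: dist_norm norm_triangle_ineq2)
      finally show ?thesis .
    qed
  qed
qed auto

lemma norm_thresh_diff_le:
  fixes x y :: "'a::euclidean_space"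
  shows "lam > 0 \<Longrightarrow> norm (thresh lam x - thresh lam y) \<le> norm (x - y)"
  using closest_point_lipschitz[of "cball (0::'a) (1 / lam)" x y]
  by (simp add: thresh_eq_closest_point dist_norm)

section \<open>Isotropic Gaussian measures\<close>

definition gauss_density :: "real \<Rightarrow> 'a::euclidean_space \<Rightarrow> 'a \<Rightarrow> real" where
  "gauss_density bt th x = exp (- (bt / 2) * (norm (x - th))\<^sup>2) / sqrt (2 * pi / bt) ^ DIM('a)"

definition gauss :: "real \<Rightarrow> 'a::euclidean_space \<Rightarrow> 'a measure" where
  "gauss bt th = density lborel (\<lambda>x. ennreal (gauss_density bt th x))"

lemma gauss_density_nonneg: "bt > 0 \<Longrightarrow> 0 \<le> gauss_density bt th x"
  by (simp add: gauss_density_def)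

lemma borel_measurable_gauss_density [measurable]: "gauss_density bt th \<in> borel_measurable borel"
  unfolding gauss_density_def by measurable

lemma space_gauss [simp]: "space (gauss bt th) = UNIV"
  by (simp add: gauss_def)

lemma sets_gauss [simp, measurable_cong]: "sets (gauss bt th) = sets borel"
  by (simp add: gauss_def)

lemma nn_integral_lborel_exp_neg_sq:
  assumes bt: "bt > 0"
  shows "(\<integral>\<^sup>+ t. ennreal (exp (- (bt / 2) * t\<^sup>2)) \<partial>lborel) = ennreal (sqrt (2 * pi / bt))"
proof -
  define s where "s = 1 / sqrt bt"
  have s: "s > 0" using bt by (simp add: s_def)
  have eq: "exp (- (bt / 2) * t\<^sup>2) = sqrt (2 * pi / bt) * normal_density 0 s t" for t
    using bt by (simp add: normal_density_def s_def real_sqrt_divide power_divide field_simps)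
  have "(\<integral>\<^sup>+ t. ennreal (normal_density 0 s t) \<partial>lborel) = 1"
    using nn_integral_eq_integral[OF integrable_normal_density[OF s], of 0]
      integral_normal_density[OF s]
    by simp
  moreover have "(\<integral>\<^sup>+ t. ennreal (exp (- (bt / 2) * t\<^sup>2)) \<partial>lborel)
      = (\<integral>\<^sup>+ t. ennreal (sqrt (2 * pi / bt)) * ennreal (normal_density 0 s t) \<partial>lborel)"
    by (intro nn_integral_cong) (subst eq, rule ennreal_mult, use bt in auto)
  ultimately show ?thesis
    by (simp add: nn_integral_cmult)
qed

lemma nn_integral_lborel_exp_neg_norm_sq:
  assumes bt: "bt > 0"
  shows "(\<integral>\<^sup>+ x. ennreal (exp (- (bt / 2) * (norm (x::'a::euclidean_space))\<^sup>2)) \<partial>lborel)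
       = ennreal (sqrt (2 * pi / bt) ^ DIM('a))"
proof -
  have eq: "exp (- (bt / 2) * (norm x)\<^sup>2) = (\<Prod>b\<in>Basis. exp (- (bt / 2) * (x \<bullet> b)\<^sup>2))" for x :: 'a
  proof -
    have "(norm x)\<^sup>2 = (\<Sum>b\<in>Basis. (x \<bullet> b) * (x \<bullet> b))"
      by (subst euclidean_inner[symmetric]) (rule power2_norm_eq_inner)
    then have "- (bt / 2) * (norm x)\<^sup>2 = (\<Sum>b\<in>Basis. - (bt / 2) * (x \<bullet> b)\<^sup>2)"
      by (simp add: sum_distrib_left power2_eq_square)
    then show ?thesis by (simp add: exp_sum)
  qed
  have "(\<integral>\<^sup>+ x. ennreal (exp (- (bt / 2) * (norm (x::'a))\<^sup>2)) \<partial>lborel)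
      = (\<integral>\<^sup>+ x. (\<Prod>b\<in>Basis. ennreal (exp (- (bt / 2) * ((x::'a) \<bullet> b)\<^sup>2))) \<partial>lborel)"
    by (simp only: eq) (simp add: prod_ennreal)
  also have "\<dots> = (\<Prod>b\<in>(Basis::'a set). (\<integral>\<^sup>+ t. ennreal (exp (- (bt / 2) * t\<^sup>2)) \<partial>lborel))"
    by (rule nn_integral_lborel_prod) auto
  also have "\<dots> = (\<Prod>b\<in>(Basis::'a set). ennreal (sqrt (2 * pi / bt)))"
    using nn_integral_lborel_exp_neg_sq[OF bt] by simp
  also have "\<dots> = ennreal (sqrt (2 * pi / bt) ^ DIM('a))"
    using bt by (simp add: ennreal_power)
  finally show ?thesis .
qed

lemma nn_integral_lborel_translate:
  fixes f :: "'a::euclidean_space \<Rightarrow> ennreal"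
  assumes [measurable]: "f \<in> borel_measurable borel"
  shows "(\<integral>\<^sup>+ x. f x \<partial>lborel) = (\<integral>\<^sup>+ x. f (c + x) \<partial>lborel)"
proof -
  have "(\<integral>\<^sup>+ x. f x \<partial>lborel) = (\<integral>\<^sup>+ x. f x \<partial>distr lborel borel ((+) c))"
    by (simp add: lborel_distr_plus)
  also have "\<dots> = (\<integral>\<^sup>+ x. f (c + x) \<partial>lborel)"
    by (subst nn_integral_distr) auto
  finally show ?thesis .
qed

lemma nn_integral_gauss_density:
  fixes th :: "'a::euclidean_space"
  assumes bt: "bt > 0"
  shows "(\<integral>\<^sup>+ x. ennreal (gauss_density bt th x) \<partial>lborel) = 1"
proof -
  have "(\<integral>\<^sup>+ x. ennreal (gauss_density bt th x) \<partial>lborel)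
      = (\<integral>\<^sup>+ x. ennreal (gauss_density bt th (th + x)) \<partial>lborel)"
    by (rule nn_integral_lborel_translate) measurable
  also have "\<dots> = (\<integral>\<^sup>+ x. ennreal (exp (- (bt / 2) * (norm (x::'a))\<^sup>2))
                         * ennreal (1 / sqrt (2 * pi / bt) ^ DIM('a)) \<partial>lborel)"
    using bt by (intro nn_integral_cong) (simp add: gauss_density_def ennreal_mult[symmetric])
  also have "\<dots> = ennreal (sqrt (2 * pi / bt) ^ DIM('a)) * ennreal (1 / sqrt (2 * pi / bt) ^ DIM('a))"
    using nn_integral_lborel_exp_neg_norm_sq[OF bt, where 'a='a] by (subst nn_integral_multc) auto
  also have "\<dots> = 1"
    using bt by (simp add: ennreal_mult[symmetric])
  finally show ?thesis .
qed

lemma prob_space_gauss: "bt > 0 \<Longrightarrow> prob_space (gauss bt th)"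
  by (rule prob_spaceI) (simp add: gauss_def emeasure_density nn_integral_gauss_density)

lemma gauss_density_mult_exp_inner:
  assumes bt: "bt > 0"
  shows "exp (x \<bullet> v) * gauss_density bt th x
    = exp (th \<bullet> v + (norm v)\<^sup>2 / (2 * bt)) * gauss_density bt (th + (1 / bt) *\<^sub>R v) x"
proof -
  have "x \<bullet> v + (- (bt / 2) * (norm (x - th))\<^sup>2)
      = (th \<bullet> v + (norm v)\<^sup>2 / (2 * bt)) + (- (bt / 2) * (norm (x - (th + (1 / bt) *\<^sub>R v)))\<^sup>2)"
    using bt by (simp add: power2_norm_eq_inner inner_simps field_simps inner_commute)
  then have "exp (x \<bullet> v) * exp (- (bt / 2) * (norm (x - th))\<^sup>2)
      = exp (th \<bullet> v + (norm v)\<^sup>2 / (2 * bt)) * exp (- (bt / 2) * (norm (x - (th + (1 / bt) *\<^sub>R v)))\<^sup>2)"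
    by (simp add: exp_add[symmetric])
  then show ?thesis
    by (simp add: gauss_density_def)
qed

lemma nn_integral_gauss_exp_inner:
  assumes bt: "bt > 0"
  shows "(\<integral>\<^sup>+ x. ennreal (exp (x \<bullet> v)) \<partial>gauss bt th) = ennreal (exp (th \<bullet> v + (norm v)\<^sup>2 / (2 * bt)))"
proof -
  have "(\<integral>\<^sup>+ x. ennreal (exp (x \<bullet> v)) \<partial>gauss bt th)
      = (\<integral>\<^sup>+ x. ennreal (exp (x \<bullet> v) * gauss_density bt th x) \<partial>lborel)"
    unfolding gauss_def using bt
    by (subst nn_integral_density) (auto simp: ennreal_mult[symmetric] gauss_density_nonneg mult.commute)
  also have "\<dots> = (\<integral>\<^sup>+ x. ennreal (exp (th \<bullet> v + (norm v)\<^sup>2 / (2 * bt)))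
                         * ennreal (gauss_density bt (th + (1 / bt) *\<^sub>R v) x) \<partial>lborel)"
    using bt by (intro nn_integral_cong) (simp add: gauss_density_mult_exp_inner ennreal_mult gauss_density_nonneg)
  also have "\<dots> = ennreal (exp (th \<bullet> v + (norm v)\<^sup>2 / (2 * bt)))"
    using bt by (simp add: nn_integral_cmult nn_integral_gauss_density)
  finally show ?thesis .
qed

lemma integrable_gauss_exp_inner: "bt > 0 \<Longrightarrow> integrable (gauss bt th) (\<lambda>x. exp (x \<bullet> v))"
  by (rule integrableI_nonneg) (auto simp: nn_integral_gauss_exp_inner)

lemma integrable_gauss_inner:
  assumes bt: "bt > 0"
  shows "integrable (gauss bt th) (\<lambda>x. x \<bullet> v)"
proof (rule Bochner_Integration.integrable_bound)
  show "integrable (gauss bt th) (\<lambda>x. exp (x \<bullet> v) + exp (x \<bullet> - v))"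
    using bt by (intro Bochner_Integration.integrable_add integrable_gauss_exp_inner)
  have "\<bar>t\<bar> \<le> exp t + exp (- t)" for t :: real
    using exp_ge_add_one_self[of t] exp_ge_add_one_self[of "- t"] exp_gt_zero[of t] exp_gt_zero[of "- t"]
    by linarith
  then show "AE x in gauss bt th. norm (x \<bullet> v) \<le> norm (exp (x \<bullet> v) + exp (x \<bullet> - v))"
    by (simp add: inner_minus_right)
qed measurable

lemma integral_gauss_inner:
  fixes th :: "'a::euclidean_space"
  assumes bt: "bt > 0"
  shows "(\<integral>x. x \<bullet> v \<partial>gauss bt th) = th \<bullet> v"
proof -
  let ?g = "gauss_density bt th"
  have int1: "integrable lborel (\<lambda>x. ?g x *\<^sub>R (x \<bullet> v))"
    using integrable_gauss_inner[OF bt, of th v] unfolding gauss_def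
    by (subst (asm) integrable_density) (auto simp: gauss_density_nonneg[OF bt])
  have int0: "integrable lborel ?g"
    by (rule integrableI_nonneg) (auto simp: nn_integral_gauss_density[OF bt] gauss_density_nonneg[OF bt])
  have I0: "(\<integral>x. ?g x \<partial>lborel) = 1"
    using bt by (subst integral_eq_nn_integral) (auto simp: nn_integral_gauss_density gauss_density_nonneg)
  define I where "I = (\<integral>x. ?g x *\<^sub>R (x \<bullet> v) \<partial>lborel)"
  \<comment> \<open>the density is symmetric about th, so reflecting through th maps I to 2 th \<bullet> v - I\<close>
  have sym: "?g (2 *\<^sub>R th - x) = ?g x" for x
  proof -
    have "2 *\<^sub>R th - x - th = - (x - th)" by (simp add: scaleR_2)
    then show ?thesis by (simp only: gauss_density_def norm_minus_cancel)
  qed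
  have "I = (\<integral>x. ?g x *\<^sub>R (x \<bullet> v) \<partial>distr lborel borel (\<lambda>x. 2 *\<^sub>R th - x))"
    using lborel_affine[of "-1" "2 *\<^sub>R th"] by (simp add: I_def density_1)
  also have "\<dots> = (\<integral>x. ?g (2 *\<^sub>R th - x) *\<^sub>R ((2 *\<^sub>R th - x) \<bullet> v) \<partial>lborel)"
    by (rule integral_distr) auto
  also have "\<dots> = (\<integral>x. 2 * (th \<bullet> v) * ?g x - ?g x *\<^sub>R (x \<bullet> v) \<partial>lborel)"
    by (intro Bochner_Integration.integral_cong refl) (simp add: sym inner_simps algebra_simps)
  also have "\<dots> = 2 * (th \<bullet> v) - I"
    using int0 int1 I0 by (simp add: I_def)
  finally have "I = th \<bullet> v" by simp
  moreover have "(\<integral>x. x \<bullet> v \<partial>gauss bt th) = I"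
    unfolding gauss_def I_def using gauss_density_nonneg[OF bt]
    by (subst integral_density) auto
  ultimately show ?thesis by simp
qed

lemma gauss_density_eq_exp_mult:
  "gauss_density bt th x = gauss_density bt 0 x * exp (bt * (th \<bullet> x) - bt / 2 * (norm th)\<^sup>2)"
proof -
  have "- (bt / 2) * (norm (x - th))\<^sup>2 = - (bt / 2) * (norm x)\<^sup>2 + (bt * (th \<bullet> x) - bt / 2 * (norm th)\<^sup>2)"
    by (simp add: power2_norm_eq_inner inner_simps inner_commute algebra_simps)
  then have "exp (- (bt / 2) * (norm (x - th))\<^sup>2)
      = exp (- (bt / 2) * (norm x)\<^sup>2) * exp (bt * (th \<bullet> x) - bt / 2 * (norm th)\<^sup>2)"
    by (simp only: exp_add)
  then show ?thesis by (simp add: gauss_density_def)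
qed

section \<open>A PAC-Bayes bound with Gaussian perturbations\<close>

(* Donsker-Varadhan for the prior gauss bt 0 and the posterior gauss bt th, whose
   Kullback-Leibler divergence is bt / 2 * (norm th)^2. *)

lemma exp_integral_gauss_le:
  fixes F :: "'a::euclidean_space \<Rightarrow> real"
  assumes bt: "bt > 0" and F [measurable]: "F \<in> borel_measurable borel"
    and int: "integrable (gauss bt th) F"
    and fin: "(\<integral>\<^sup>+ x. ennreal (exp (F x)) \<partial>gauss bt 0) < \<infinity>"
  shows "exp ((\<integral>x. F x \<partial>gauss bt th) - bt / 2 * (norm th)\<^sup>2)
    \<le> enn2real (\<integral>\<^sup>+ x. ennreal (exp (F x)) \<partial>gauss bt 0)"
proof -
  interpret rho: prob_space "gauss bt th" by (rule prob_space_gauss[OF bt])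
  define phi where "phi x = F x - (bt * (th \<bullet> x) - bt / 2 * (norm th)\<^sup>2)" for x
  have phi_meas [measurable]: "phi \<in> borel_measurable borel"
    unfolding phi_def by measurable
  have change: "(\<integral>\<^sup>+ x. ennreal (exp (F x)) \<partial>gauss bt 0) = (\<integral>\<^sup>+ x. ennreal (exp (phi x)) \<partial>gauss bt th)"
  proof -
    have "ennreal (gauss_density bt 0 x) * ennreal (exp (F x))
        = ennreal (gauss_density bt th x) * ennreal (exp (phi x))" for x
    proof -
      have "gauss_density bt th x * exp (phi x) = gauss_density bt 0 x * exp (F x)"
        by (subst gauss_density_eq_exp_mult) (simp add: phi_def mult.assoc mult_exp_exp)
      then show ?thesis
        using bt by (simp add: ennreal_mult[symmetric] gauss_density_nonneg)
    qed
    then show ?thesis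
      unfolding gauss_def by (simp add: nn_integral_density)
  qed
  have int_exp_phi: "integrable (gauss bt th) (\<lambda>x. exp (phi x))"
    by (rule integrableI_nonneg) (use fin in \<open>auto simp: change\<close>)
  have int_inner: "integrable (gauss bt th) (\<lambda>x. bt * (th \<bullet> x) - bt / 2 * (norm th)\<^sup>2)"
    using integrable_gauss_inner[OF bt, of th th] by (simp add: inner_commute)
  have "(\<integral>x. bt * (th \<bullet> x) - bt / 2 * (norm th)\<^sup>2 \<partial>gauss bt th) = bt / 2 * (norm th)\<^sup>2"
    using integral_gauss_inner[OF bt, of th th] integrable_gauss_inner[OF bt, of th th] rho.prob_space
    by (simp add: inner_commute power2_norm_eq_inner)
  then have "(\<integral>x. phi x \<partial>gauss bt th) = (\<integral>x. F x \<partial>gauss bt th) - bt / 2 * (norm th)\<^sup>2"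
    using int int_inner by (simp add: phi_def)
  moreover have "exp (\<integral>x. phi x \<partial>gauss bt th) \<le> (\<integral>x. exp (phi x) \<partial>gauss bt th)"
    using int int_inner int_exp_phi unfolding phi_def
    by (intro rho.jensens_inequality[where I = UNIV]) (auto intro: exp_convex)
  ultimately have "exp ((\<integral>x. F x \<partial>gauss bt th) - bt / 2 * (norm th)\<^sup>2) \<le> (\<integral>x. exp (phi x) \<partial>gauss bt th)"
    by simp
  also have "\<dots> = enn2real (\<integral>\<^sup>+ x. ennreal (exp (F x)) \<partial>gauss bt 0)"
    by (subst integral_eq_nn_integral) (auto simp: change)
  finally show ?thesis .
qed

lemma (in prob_space) nn_integral_exp_sum_iid_le_1:
  fixes X :: "'a \<Rightarrow> 'b::topological_space" and Xs :: "'i \<Rightarrow> 'a \<Rightarrow> 'b" and h :: "'b \<Rightarrow> real"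
  assumes I: "finite I"
    and X [measurable]: "X \<in> borel_measurable M"
    and Xs [measurable]: "\<And>i. i \<in> I \<Longrightarrow> Xs i \<in> borel_measurable M"
    and Xs_distr: "\<And>i. i \<in> I \<Longrightarrow> distr M borel (Xs i) = distr M borel X"
    and Xs_indep: "indep_vars (\<lambda>_. borel) Xs I"
    and h [measurable]: "h \<in> borel_measurable borel"
    and int: "integrable M (\<lambda>\<omega>. exp (h (X \<omega>)))"
  shows "(\<integral>\<^sup>+ \<omega>. ennreal (exp ((\<Sum>i\<in>I. h (Xs i \<omega>))
            - real (card I) * ((\<integral>\<omega>. exp (h (X \<omega>)) \<partial>M) - 1))) \<partial>M) \<le> 1"
proof -
  define G where "G = (\<integral>\<omega>. exp (h (X \<omega>)) \<partial>M)"
  define c where "c = exp (- (real (card I) * (G - 1)))"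
  have G: "G \<ge> 0" unfolding G_def by simp
  have moment: "(\<integral>\<^sup>+ \<omega>. ennreal (exp (h (Xs i \<omega>))) \<partial>M) = ennreal G" if i: "i \<in> I" for i
  proof -
    have "(\<integral>\<^sup>+ \<omega>. ennreal (exp (h (Xs i \<omega>))) \<partial>M) = (\<integral>\<^sup>+ x. ennreal (exp (h x)) \<partial>distr M borel (Xs i))"
      using i by (subst nn_integral_distr) auto
    also have "\<dots> = (\<integral>\<^sup>+ x. ennreal (exp (h x)) \<partial>distr M borel X)"
      using Xs_distr[OF i] by simp
    also have "\<dots> = (\<integral>\<^sup>+ \<omega>. ennreal (exp (h (X \<omega>))) \<partial>M)"
      by (subst nn_integral_distr) auto
    finally show ?thesis
      using int by (simp add: G_def nn_integral_eq_integral)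
  qed
  have indep: "indep_vars (\<lambda>_. borel) (\<lambda>i \<omega>. ennreal (exp (h (Xs i \<omega>)))) I"
    by (rule indep_vars_compose2[OF Xs_indep]) measurable
  have "(\<integral>\<^sup>+ \<omega>. ennreal (exp ((\<Sum>i\<in>I. h (Xs i \<omega>)) - real (card I) * (G - 1))) \<partial>M)
      = (\<integral>\<^sup>+ \<omega>. (\<Prod>i\<in>I. ennreal (exp (h (Xs i \<omega>)))) * ennreal c \<partial>M)"
    by (intro nn_integral_cong)
      (simp add: c_def exp_diff exp_minus divide_inverse exp_sum I prod_ennreal ennreal_mult prod_nonneg)
  also have "\<dots> = (\<Prod>i\<in>I. \<integral>\<^sup>+ \<omega>. ennreal (exp (h (Xs i \<omega>))) \<partial>M) * ennreal c"
    using indep_vars_nn_integral[OF I indep] by (subst nn_integral_multc) auto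
  also have "\<dots> = ennreal (G ^ card I * c)"
    using G by (simp add: moment ennreal_power ennreal_mult c_def)
  also have "\<dots> \<le> ennreal 1"
  proof (intro ennreal_leI)
    have "G ^ card I \<le> exp (G - 1) ^ card I"
      using exp_ge_add_one_self[of "G - 1"] G by (intro power_mono) auto
    also have "\<dots> = exp (real (card I) * (G - 1))"
      by (simp add: exp_of_nat_mult[symmetric])
    finally have "G ^ card I * c \<le> exp (real (card I) * (G - 1)) * c"
      by (rule mult_right_mono) (simp add: c_def)
    then show "G ^ card I * c \<le> 1"
      by (simp add: c_def mult_exp_exp)
  qed
  finally show ?thesis by (simp add: G_def)
qed

lemma (in prob_space) prob_ge_of_nn_integral_le_1:
  assumes Z [measurable]: "Z \<in> borel_measurable M" and EZ: "(\<integral>\<^sup>+ \<omega>. Z \<omega> \<partial>M) \<le> 1"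
    and delta: "delta > 0"
  shows "prob {\<omega> \<in> space M. ennreal delta * Z \<omega> < 1} \<ge> 1 - delta"
proof -
  define B where "B = {\<omega> \<in> space M. 1 \<le> ennreal delta * Z \<omega>}"
  have "emeasure M B \<le> ennreal delta * (\<integral>\<^sup>+ \<omega>. Z \<omega> * indicator (space M) \<omega> \<partial>M)"
    unfolding B_def by (rule nn_integral_Markov_inequality) measurable
  also have "(\<integral>\<^sup>+ \<omega>. Z \<omega> * indicator (space M) \<omega> \<partial>M) = (\<integral>\<^sup>+ \<omega>. Z \<omega> \<partial>M)"
    by (intro nn_integral_cong) (simp add: indicator_def)
  also have "ennreal delta * \<dots> \<le> ennreal delta"
    using EZ mult_left_mono[OF EZ, of "ennreal delta"] by simp
  finally have "prob B \<le> delta"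
    using delta by (simp add: measure_def enn2real_leI)
  moreover have "{\<omega> \<in> space M. ennreal delta * Z \<omega> < 1} = space M - B"
    by (auto simp: B_def not_le)
  moreover have "B \<in> sets M" unfolding B_def by measurable
  ultimately show ?thesis
    using prob_compl by simp
qed

lemma (in prob_space) integrable_exp_inner_norm_sq:
  fixes Y :: "'a \<Rightarrow> 'd::euclidean_space"
  assumes Y [measurable]: "Y \<in> borel_measurable M" and bnd: "\<And>\<omega>. \<omega> \<in> space M \<Longrightarrow> norm (Y \<omega>) \<le> K"
  shows "integrable M (\<lambda>\<omega>. exp (x \<bullet> Y \<omega> + c * (norm (Y \<omega>))\<^sup>2))"
proof (rule integrable_const_bound[where B = "exp (norm x * K + \<bar>c\<bar> * K\<^sup>2)"])
  show "AE \<omega> in M. norm (exp (x \<bullet> Y \<omega> + c * (norm (Y \<omega>))\<^sup>2)) \<le> exp (norm x * K + \<bar>c\<bar> * K\<^sup>2)"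
  proof (rule AE_I2)
    fix \<omega> assume \<omega>: "\<omega> \<in> space M"
    have "x \<bullet> Y \<omega> \<le> norm x * norm (Y \<omega>)" by (rule norm_cauchy_schwarz)
    also have "\<dots> \<le> norm x * K" using bnd[OF \<omega>] by (intro mult_left_mono) auto
    finally have "x \<bullet> Y \<omega> \<le> norm x * K" .
    moreover have "c * (norm (Y \<omega>))\<^sup>2 \<le> \<bar>c\<bar> * (norm (Y \<omega>))\<^sup>2"
      by (intro mult_right_mono) auto
    moreover have "\<bar>c\<bar> * (norm (Y \<omega>))\<^sup>2 \<le> \<bar>c\<bar> * K\<^sup>2"
      using bnd[OF \<omega>] by (intro mult_left_mono power_mono) auto
    ultimately show "norm (exp (x \<bullet> Y \<omega> + c * (norm (Y \<omega>))\<^sup>2)) \<le> exp (norm x * K + \<bar>c\<bar> * K\<^sup>2)"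
      by simp
  qed
qed measurable

lemma (in prob_space) nn_integral_gauss_expectation_exp_inner:
  fixes Y :: "'a \<Rightarrow> 'd::euclidean_space"
  assumes bt: "bt > 0"
    and Y [measurable]: "Y \<in> borel_measurable M" and bnd: "\<And>\<omega>. \<omega> \<in> space M \<Longrightarrow> norm (Y \<omega>) \<le> K"
  shows "(\<integral>\<^sup>+ x. ennreal (\<integral>\<omega>. exp (x \<bullet> Y \<omega>) \<partial>M) \<partial>gauss bt th)
    = ennreal (\<integral>\<omega>. exp (th \<bullet> Y \<omega> + (norm (Y \<omega>))\<^sup>2 / (2 * bt)) \<partial>M)"
proof -
  interpret gauss: prob_space "gauss bt th" by (rule prob_space_gauss[OF bt])
  interpret pair_sigma_finite "gauss bt th" M ..
  have "(\<integral>\<^sup>+ x. ennreal (\<integral>\<omega>. exp (x \<bullet> Y \<omega>) \<partial>M) \<partial>gauss bt th)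
      = (\<integral>\<^sup>+ x. (\<integral>\<^sup>+ \<omega>. ennreal (exp (x \<bullet> Y \<omega>)) \<partial>M) \<partial>gauss bt th)"
    using integrable_exp_inner_norm_sq[OF Y bnd, where c = 0]
    by (intro nn_integral_cong) (simp add: nn_integral_eq_integral)
  also have "\<dots> = (\<integral>\<^sup>+ \<omega>. (\<integral>\<^sup>+ x. ennreal (exp (x \<bullet> Y \<omega>)) \<partial>gauss bt th) \<partial>M)"
    by (rule Fubini'[symmetric]) measurable
  also have "\<dots> = (\<integral>\<^sup>+ \<omega>. ennreal (exp (th \<bullet> Y \<omega> + (norm (Y \<omega>))\<^sup>2 / (2 * bt))) \<partial>M)"
    using bt by (simp add: nn_integral_gauss_exp_inner inner_commute)
  also have "\<dots> = ennreal (\<integral>\<omega>. exp (th \<bullet> Y \<omega> + (norm (Y \<omega>))\<^sup>2 / (2 * bt)) \<partial>M)"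
    using integrable_exp_inner_norm_sq[OF Y bnd, where x = th and c = "1 / (2 * bt)"]
    by (intro nn_integral_eq_integral) auto
  finally show ?thesis .
qed

lemma (in prob_space) exp_pac_bayes_gauss_le:
  fixes Y :: "'a \<Rightarrow> 'd::euclidean_space"
  assumes bt: "bt > 0"
    and Y [measurable]: "Y \<in> borel_measurable M" and bnd: "\<And>\<omega>. \<omega> \<in> space M \<Longrightarrow> norm (Y \<omega>) \<le> K"
    and fin: "(\<integral>\<^sup>+ x. ennreal (exp (x \<bullet> v - N * ((\<integral>\<omega>. exp (x \<bullet> Y \<omega>) \<partial>M) - 1))) \<partial>gauss bt 0) < \<infinity>"
  shows "exp (th \<bullet> v - N * ((\<integral>\<omega>. exp (th \<bullet> Y \<omega> + (norm (Y \<omega>))\<^sup>2 / (2 * bt)) \<partial>M) - 1)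
              - bt / 2 * (norm th)\<^sup>2)
    \<le> enn2real (\<integral>\<^sup>+ x. ennreal (exp (x \<bullet> v - N * ((\<integral>\<omega>. exp (x \<bullet> Y \<omega>) \<partial>M) - 1))) \<partial>gauss bt 0)"
proof -
  interpret rho: prob_space "gauss bt th" by (rule prob_space_gauss[OF bt])
  define G where "G x = (\<integral>\<omega>. exp (x \<bullet> Y \<omega>) \<partial>M)" for x :: 'd
  define EG where "EG = (\<integral>\<omega>. exp (th \<bullet> Y \<omega> + (norm (Y \<omega>))\<^sup>2 / (2 * bt)) \<partial>M)"
  have G_meas [measurable]: "G \<in> borel_measurable borel"
    unfolding G_def by measurable
  have G_nonneg: "G x \<ge> 0" for x
    by (simp add: G_def)
  have nn_G: "(\<integral>\<^sup>+ x. ennreal (G x) \<partial>gauss bt th) = ennreal EG"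
    unfolding G_def EG_def by (rule nn_integral_gauss_expectation_exp_inner[OF bt Y bnd])
  have int_G: "integrable (gauss bt th) G"
  proof (rule integrableI_nonneg)
    show "(\<integral>\<^sup>+ x. ennreal (G x) \<partial>gauss bt th) < \<infinity>" using nn_G by simp
  qed (auto simp: G_nonneg)
  have "(\<integral>x. G x \<partial>gauss bt th) = EG"
    using nn_G by (subst integral_eq_nn_integral) (auto simp: G_nonneg EG_def)
  then have integral_F: "(\<integral>x. x \<bullet> v - N * (G x - 1) \<partial>gauss bt th) = th \<bullet> v - N * (EG - 1)"
    and integrable_F: "integrable (gauss bt th) (\<lambda>x. x \<bullet> v - N * (G x - 1))"
    using int_G integrable_gauss_inner[OF bt, of th v] integral_gauss_inner[OF bt, of th v] rho.prob_space
    by simp_all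
  have "exp ((\<integral>x. x \<bullet> v - N * (G x - 1) \<partial>gauss bt th) - bt / 2 * (norm th)\<^sup>2)
      \<le> enn2real (\<integral>\<^sup>+ x. ennreal (exp (x \<bullet> v - N * (G x - 1))) \<partial>gauss bt 0)"
    by (rule exp_integral_gauss_le[OF bt _ integrable_F fin[folded G_def]]) measurable
  then show ?thesis
    unfolding integral_F by (simp add: G_def EG_def)
qed

lemma enn2real_lt_of_mult_lt_1:
  assumes "delta > 0" and "ennreal delta * z < 1"
  shows "z < \<infinity>" and "enn2real z < 1 / delta"
proof -
  show fin: "z < \<infinity>"
    using assms by (cases z) (auto simp: ennreal_mult_top)
  then obtain r where z: "z = ennreal r" "0 \<le> r" by (cases z) auto
  then have "delta * r < 1"
    using assms by (simp add: ennreal_mult[symmetric] ennreal_less_one_iff)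
  then show "enn2real z < 1 / delta" using z assms by (simp add: field_simps)
qed

lemma (in prob_space) pac_bayes_gauss:
  fixes X :: "'a \<Rightarrow> 'b::topological_space" and Xs :: "'i \<Rightarrow> 'a \<Rightarrow> 'b"
    and f :: "'b \<Rightarrow> 'd::euclidean_space"
  assumes I: "finite I"
    and X [measurable]: "X \<in> borel_measurable M"
    and Xs [measurable]: "\<And>i. i \<in> I \<Longrightarrow> Xs i \<in> borel_measurable M"
    and Xs_distr: "\<And>i. i \<in> I \<Longrightarrow> distr M borel (Xs i) = distr M borel X"
    and Xs_indep: "indep_vars (\<lambda>_. borel) Xs I"
    and f [measurable]: "f \<in> borel_measurable borel" and f_bnd: "\<And>x. norm (f x) \<le> K"
    and bt: "bt > 0" and delta: "delta > 0"
  shows "\<exists>A \<in> sets M. prob A \<ge> 1 - delta \<and>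
    (\<forall>\<omega> \<in> A. \<forall>th. (\<Sum>i\<in>I. th \<bullet> f (Xs i \<omega>)) \<le>
        real (card I) * ((\<integral>\<omega>'. exp (th \<bullet> f (X \<omega>') + (norm (f (X \<omega>')))\<^sup>2 / (2 * bt)) \<partial>M) - 1)
        + bt / 2 * (norm th)\<^sup>2 + ln (1 / delta))"
proof -
  interpret prior: prob_space "gauss bt (0::'d)" by (rule prob_space_gauss[OF bt])
  interpret pair_sigma_finite "gauss bt (0::'d)" M ..
  have fX_bnd: "norm (f (X \<omega>)) \<le> K" for \<omega> by (rule f_bnd)
  define F where "F \<omega> x = x \<bullet> (\<Sum>i\<in>I. f (Xs i \<omega>)) - real (card I) * ((\<integral>\<omega>'. exp (x \<bullet> f (X \<omega>')) \<partial>M) - 1)"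
    for \<omega> and x :: 'd
  define Z where "Z \<omega> = (\<integral>\<^sup>+ x. ennreal (exp (F \<omega> x)) \<partial>gauss bt 0)" for \<omega>
  have Z_meas [measurable]: "Z \<in> borel_measurable M"
    unfolding Z_def F_def by measurable
  have "(\<integral>\<^sup>+ \<omega>. Z \<omega> \<partial>M) = (\<integral>\<^sup>+ x. (\<integral>\<^sup>+ \<omega>. ennreal (exp (F \<omega> x)) \<partial>M) \<partial>gauss bt 0)"
    unfolding Z_def F_def by (rule Fubini') measurable
  also have "\<dots> \<le> (\<integral>\<^sup>+ x. 1 \<partial>gauss bt (0::'d))"
  proof (intro nn_integral_mono)
    fix x :: 'd
    show "(\<integral>\<^sup>+ \<omega>. ennreal (exp (F \<omega> x)) \<partial>M) \<le> 1"
      using nn_integral_exp_sum_iid_le_1[OF I X Xs Xs_distr Xs_indep, where h = "\<lambda>y. x \<bullet> f y"]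
        integrable_exp_inner_norm_sq[where Y = "\<lambda>\<omega>. f (X \<omega>)" and c = 0, OF _ fX_bnd]
      by (simp add: F_def inner_sum_right)
  qed
  finally have EZ: "(\<integral>\<^sup>+ \<omega>. Z \<omega> \<partial>M) \<le> 1"
    using prior.emeasure_space_1 by simp
  define A where "A = {\<omega> \<in> space M. ennreal delta * Z \<omega> < 1}"
  have "(\<Sum>i\<in>I. th \<bullet> f (Xs i \<omega>)) \<le>
        real (card I) * ((\<integral>\<omega>'. exp (th \<bullet> f (X \<omega>') + (norm (f (X \<omega>')))\<^sup>2 / (2 * bt)) \<partial>M) - 1)
        + bt / 2 * (norm th)\<^sup>2 + ln (1 / delta)" if \<omega>: "\<omega> \<in> A" for \<omega> th
  proof -
    have dZ: "ennreal delta * Z \<omega> < 1" using \<omega> by (simp add: A_def)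
    have "exp (th \<bullet> (\<Sum>i\<in>I. f (Xs i \<omega>))
        - real (card I) * ((\<integral>\<omega>'. exp (th \<bullet> f (X \<omega>') + (norm (f (X \<omega>')))\<^sup>2 / (2 * bt)) \<partial>M) - 1)
        - bt / 2 * (norm th)\<^sup>2) \<le> enn2real (Z \<omega>)"
      using enn2real_lt_of_mult_lt_1(1)[OF delta dZ] unfolding Z_def F_def
      by (intro exp_pac_bayes_gauss_le[OF bt _ fX_bnd]) auto
    also have "\<dots> < 1 / delta"
      by (rule enn2real_lt_of_mult_lt_1(2)[OF delta dZ])
    finally show ?thesis
      using ln_strict_mono by (fastforce simp: inner_sum_right)
  qed
  moreover have "A \<in> sets M" unfolding A_def by measurable
  moreover have "prob A \<ge> 1 - delta"
    unfolding A_def by (rule prob_ge_of_nn_integral_le_1[OF Z_meas EZ delta])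
  ultimately show ?thesis by blast
qed

lemma (in prob_space) integrable_of_integrable_norm_sq:
  fixes Y :: "'a \<Rightarrow> 'd::euclidean_space"
  assumes Y [measurable]: "Y \<in> borel_measurable M" and L2: "integrable M (\<lambda>\<omega>. (norm (Y \<omega>))\<^sup>2)"
  shows "integrable M Y"
proof (rule Bochner_Integration.integrable_bound)
  show "integrable M (\<lambda>\<omega>. 1 + (norm (Y \<omega>))\<^sup>2)" using L2 by simp
  have "norm y \<le> 1 + (norm y)\<^sup>2" for y :: 'd
  proof -
    have "2 * norm y \<le> (norm y)\<^sup>2 + 1"
      using sum_power2_ge_zero[of "norm y - 1" 0] by (simp add: power2_diff)
    then show ?thesis using norm_ge_zero[of y] by linarith
  qed
  then show "AE \<omega> in M. norm (Y \<omega>) \<le> norm (1 + (norm (Y \<omega>))\<^sup>2)"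
    by (simp add: add_nonneg_nonneg)
qed measurable

lemma (in prob_space) integrable_norm_diff_sq:
  fixes Y :: "'a \<Rightarrow> 'd::euclidean_space"
  assumes Y [measurable]: "Y \<in> borel_measurable M" and L2: "integrable M (\<lambda>\<omega>. (norm (Y \<omega>))\<^sup>2)"
  shows "integrable M (\<lambda>\<omega>. (norm (Y \<omega> - c))\<^sup>2)"
proof (rule Bochner_Integration.integrable_bound)
  show "integrable M (\<lambda>\<omega>. 2 * (norm (Y \<omega>))\<^sup>2 + 2 * (norm c)\<^sup>2)" using L2 by simp
  have "(norm (y - c))\<^sup>2 \<le> 2 * (norm y)\<^sup>2 + 2 * (norm c)\<^sup>2" for y
  proof -
    have "(norm (y - c))\<^sup>2 \<le> (norm y + norm c)\<^sup>2"
      by (intro power_mono norm_triangle_ineq4) simp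
    also have "\<dots> \<le> 2 * (norm y)\<^sup>2 + 2 * (norm c)\<^sup>2"
      using sum_power2_ge_zero[of "norm y - norm c" 0] by (simp add: power2_sum power2_diff)
    finally show ?thesis .
  qed
  then show "AE \<omega> in M. norm ((norm (Y \<omega> - c))\<^sup>2) \<le> norm (2 * (norm (Y \<omega>))\<^sup>2 + 2 * (norm c)\<^sup>2)"
    by simp
qed measurable

lemma (in prob_space) integrable_inner_sq:
  fixes Y :: "'a \<Rightarrow> 'd::euclidean_space"
  assumes Y [measurable]: "Y \<in> borel_measurable M" and L2: "integrable M (\<lambda>\<omega>. (norm (Y \<omega>))\<^sup>2)"
  shows "integrable M (\<lambda>\<omega>. (th \<bullet> Y \<omega>)\<^sup>2)"
proof (rule Bochner_Integration.integrable_bound)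
  show "integrable M (\<lambda>\<omega>. (norm th)\<^sup>2 * (norm (Y \<omega>))\<^sup>2)"
    using L2 by simp
  show "AE \<omega> in M. norm ((th \<bullet> Y \<omega>)\<^sup>2) \<le> norm ((norm th)\<^sup>2 * (norm (Y \<omega>))\<^sup>2)"
    by (intro AE_I2) (simp add: power2_inner_le)
qed measurable

lemma (in prob_space) integral_norm_diff_expectation_sq_le:
  fixes Y :: "'a \<Rightarrow> 'd::euclidean_space"
  assumes Y [measurable]: "Y \<in> borel_measurable M" and L2: "integrable M (\<lambda>\<omega>. (norm (Y \<omega>))\<^sup>2)"
  shows "(\<integral>\<omega>. (norm (Y \<omega> - expectation Y))\<^sup>2 \<partial>M) \<le> (\<integral>\<omega>. (norm (Y \<omega> - c))\<^sup>2 \<partial>M)"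
proof -
  define m where "m = expectation Y"
  have iY: "integrable M Y" by (rule integrable_of_integrable_norm_sq[OF Y L2])
  have cross: "integrable M (\<lambda>\<omega>. 2 * ((Y \<omega> - m) \<bullet> (m - c)))"
    using iY by (intro integrable_mult_right integrable_inner_left) simp
  have "(norm (Y \<omega> - c))\<^sup>2 = (norm (Y \<omega> - m))\<^sup>2 + 2 * ((Y \<omega> - m) \<bullet> (m - c)) + (norm (m - c))\<^sup>2" for \<omega>
    using dot_norm[of "Y \<omega> - m" "m - c"] by simp
  then have "(\<integral>\<omega>. (norm (Y \<omega> - c))\<^sup>2 \<partial>M)
      = (\<integral>\<omega>. (norm (Y \<omega> - m))\<^sup>2 \<partial>M) + (\<integral>\<omega>. 2 * ((Y \<omega> - m) \<bullet> (m - c)) \<partial>M) + (norm (m - c))\<^sup>2"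
    using integrable_norm_diff_sq[OF Y L2] cross by (simp add: prob_space)
  also have "(\<integral>\<omega>. 2 * ((Y \<omega> - m) \<bullet> (m - c)) \<partial>M) = 0"
    using iY by (simp add: m_def prob_space)
  finally show ?thesis by (simp add: m_def)
qed

lemma (in prob_space) expectation_exp_le_variances:
  fixes W :: "'a \<Rightarrow> 'd::euclidean_space"
  assumes W [measurable]: "W \<in> borel_measurable M" and mean: "expectation W = 0"
    and bnd: "\<And>\<omega>. \<omega> \<in> space M \<Longrightarrow> norm (W \<omega>) \<le> c"
    and c: "c > 0" and bt: "bt > 0" and th: "norm th \<le> 1"
    and b: "b \<ge> exp c * g1 (c\<^sup>2 / (2 * bt))"
  shows "(\<integral>\<omega>. exp (th \<bullet> W \<omega> + (norm (W \<omega>))\<^sup>2 / (2 * bt)) \<partial>M)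
    \<le> 1 + g2 c / 2 * (\<integral>\<omega>. (th \<bullet> W \<omega>)\<^sup>2 \<partial>M) + b / (2 * bt) * (\<integral>\<omega>. (norm (W \<omega>))\<^sup>2 \<partial>M)"
proof -
  have inner_le: "\<bar>th \<bullet> W \<omega>\<bar> \<le> c" if "\<omega> \<in> space M" for \<omega>
    using Cauchy_Schwarz_ineq2[of th "W \<omega>"] mult_mono[OF th bnd[OF that]] by simp
  have sq_le: "(norm (W \<omega>))\<^sup>2 \<le> c\<^sup>2" if "\<omega> \<in> space M" for \<omega>
    using bnd[OF that] by (intro power_mono) auto
  have int_W: "integrable M W"
    by (rule integrable_const_bound[where B = c]) (auto simp: bnd)
  have int_inner_sq: "integrable M (\<lambda>\<omega>. (th \<bullet> W \<omega>)\<^sup>2)"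
    using power_mono[OF inner_le, of _ 2]
    by (intro integrable_const_bound[where B = "c\<^sup>2"]) auto
  have int_norm_sq: "integrable M (\<lambda>\<omega>. (norm (W \<omega>))\<^sup>2)"
    using sq_le by (intro integrable_const_bound[where B = "c\<^sup>2"]) auto
  have "(\<integral>\<omega>. exp (th \<bullet> W \<omega> + (norm (W \<omega>))\<^sup>2 / (2 * bt)) \<partial>M)
      \<le> (\<integral>\<omega>. 1 + th \<bullet> W \<omega> + g2 c * (th \<bullet> W \<omega>)\<^sup>2 / 2 + b * ((norm (W \<omega>))\<^sup>2 / (2 * bt)) \<partial>M)"
  proof (rule integral_mono_AE)
    show "integrable M (\<lambda>\<omega>. exp (th \<bullet> W \<omega> + (norm (W \<omega>))\<^sup>2 / (2 * bt)))"
      using integrable_exp_inner_norm_sq[OF W bnd, of th "1 / (2 * bt)"] by simp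
    show "integrable M (\<lambda>\<omega>. 1 + th \<bullet> W \<omega> + g2 c * (th \<bullet> W \<omega>)\<^sup>2 / 2 + b * ((norm (W \<omega>))\<^sup>2 / (2 * bt)))"
      using int_W int_inner_sq int_norm_sq by simp
    show "AE \<omega> in M. exp (th \<bullet> W \<omega> + (norm (W \<omega>))\<^sup>2 / (2 * bt))
        \<le> 1 + th \<bullet> W \<omega> + g2 c * (th \<bullet> W \<omega>)\<^sup>2 / 2 + b * ((norm (W \<omega>))\<^sup>2 / (2 * bt))"
    proof (rule AE_I2)
      fix \<omega> assume \<omega>: "\<omega> \<in> space M"
      show "exp (th \<bullet> W \<omega> + (norm (W \<omega>))\<^sup>2 / (2 * bt))
          \<le> 1 + th \<bullet> W \<omega> + g2 c * (th \<bullet> W \<omega>)\<^sup>2 / 2 + b * ((norm (W \<omega>))\<^sup>2 / (2 * bt))"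
        using inner_le[OF \<omega>] sq_le[OF \<omega>] c bt b
        by (intro exp_add_le_g2_g1) (auto intro: divide_right_mono)
    qed
  qed
  also have "\<dots> = 1 + g2 c / 2 * (\<integral>\<omega>. (th \<bullet> W \<omega>)\<^sup>2 \<partial>M) + b / (2 * bt) * (\<integral>\<omega>. (norm (W \<omega>))\<^sup>2 \<partial>M)"
    using int_W int_inner_sq int_norm_sq mean by (simp add: prob_space)
  finally show ?thesis .
qed

section \<open>The thresholded sample mean\<close>

lemma ereal_integral_le_mult_nn_integral:
  fixes g h :: "'a \<Rightarrow> real"
  assumes g: "integrable M g" and g_nonneg: "\<And>\<omega>. \<omega> \<in> space M \<Longrightarrow> 0 \<le> g \<omega>"
    and gh: "\<And>\<omega>. \<omega> \<in> space M \<Longrightarrow> g \<omega> \<le> c * h \<omega>" and c: "0 \<le> c"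
    and h [measurable]: "h \<in> borel_measurable M" and h_nonneg: "\<And>\<omega>. \<omega> \<in> space M \<Longrightarrow> 0 \<le> h \<omega>"
  shows "ereal (integral\<^sup>L M g) \<le> ereal c * enn2ereal (\<integral>\<^sup>+ \<omega>. ennreal (h \<omega>) \<partial>M)"
proof -
  have "ennreal (integral\<^sup>L M g) = (\<integral>\<^sup>+ \<omega>. ennreal (g \<omega>) \<partial>M)"
    using g_nonneg by (intro nn_integral_eq_integral[symmetric] g) (auto intro: AE_I2)
  also have "\<dots> \<le> (\<integral>\<^sup>+ \<omega>. ennreal c * ennreal (h \<omega>) \<partial>M)"
    using gh c h_nonneg by (intro nn_integral_mono) (simp add: ennreal_mult[symmetric])
  also have "\<dots> = ennreal c * (\<integral>\<^sup>+ \<omega>. ennreal (h \<omega>) \<partial>M)"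
    by (rule nn_integral_cmult) measurable
  finally have le: "ennreal (integral\<^sup>L M g) \<le> ennreal c * (\<integral>\<^sup>+ \<omega>. ennreal (h \<omega>) \<partial>M)" .
  have "integral\<^sup>L M g \<ge> 0" using g_nonneg by (intro integral_nonneg_AE) (auto intro: AE_I2)
  then have "ereal (integral\<^sup>L M g) = enn2ereal (ennreal (integral\<^sup>L M g))"
    by (simp add: enn2ereal_ennreal)
  also have "\<dots> \<le> enn2ereal (ennreal c * (\<integral>\<^sup>+ \<omega>. ennreal (h \<omega>) \<partial>M))"
    using le by (simp add: less_eq_ennreal.rep_eq)
  also have "\<dots> = ereal c * enn2ereal (\<integral>\<^sup>+ \<omega>. ennreal (h \<omega>) \<partial>M)"
    using c by (simp add: times_ennreal.rep_eq enn2ereal_ennreal)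
  finally show ?thesis .
qed

locale thresholded_sample = prob_space M for M :: "'a measure" +
  fixes X :: "'a \<Rightarrow> 'd::euclidean_space" and lam :: real
  assumes X [measurable]: "X \<in> borel_measurable M"
    and X_L2: "integrable M (\<lambda>\<omega>. (norm (X \<omega>))\<^sup>2)"
    and lam: "lam > 0"
begin

abbreviation thresh_mean :: 'd where
  "thresh_mean \<equiv> expectation (\<lambda>\<omega>. thresh lam (X \<omega>))"

lemma integrable_X: "integrable M X"
  by (rule integrable_of_integrable_norm_sq[OF X X_L2])

lemma integrable_thresh: "integrable M (\<lambda>\<omega>. thresh lam (X \<omega>))"
  by (rule integrable_const_bound[where B = "1 / lam"]) (auto simp: norm_thresh_le[OF lam])

lemma norm_expectation_thresh_le: "norm thresh_mean \<le> 1 / lam"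
proof -
  have "norm thresh_mean \<le> expectation (\<lambda>\<omega>. norm (thresh lam (X \<omega>)))"
    by (rule integral_norm_bound)
  also have "\<dots> \<le> expectation (\<lambda>\<omega>. 1 / lam)"
    using integrable_thresh by (intro integral_mono) (auto simp: norm_thresh_le[OF lam])
  finally show ?thesis by (simp add: prob_space)
qed

lemma integrable_thresh_norm_sq: "integrable M (\<lambda>\<omega>. (norm (thresh lam (X \<omega>)))\<^sup>2)"
  using norm_thresh_le[OF lam] power_mono[OF norm_thresh_le[OF lam], of _ 2]
  by (intro integrable_const_bound[where B = "(1 / lam)\<^sup>2"]) auto

lemma variance_thresh_le:
  "(\<integral>\<omega>. (norm (thresh lam (X \<omega>) - thresh_mean))\<^sup>2 \<partial>M)
    \<le> (\<integral>\<omega>. (norm (X \<omega> - expectation X))\<^sup>2 \<partial>M)"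
proof -
  have "(\<integral>\<omega>. (norm (thresh lam (X \<omega>) - thresh_mean))\<^sup>2 \<partial>M)
      \<le> (\<integral>\<omega>. (norm (thresh lam (X \<omega>) - thresh lam (expectation X)))\<^sup>2 \<partial>M)"
    by (rule integral_norm_diff_expectation_sq_le[OF _ integrable_thresh_norm_sq]) measurable
  also have "\<dots> \<le> (\<integral>\<omega>. (norm (X \<omega> - expectation X))\<^sup>2 \<partial>M)"
    using integrable_norm_diff_sq[OF X X_L2] integrable_norm_diff_sq[OF _ integrable_thresh_norm_sq]
    by (intro integral_mono power_mono norm_thresh_diff_le[OF lam]) auto
  finally show ?thesis .
qed

lemma integrable_one_minus_thresh_factor: "integrable M (\<lambda>\<omega>. 1 - thresh_factor lam (X \<omega>))"
proof (rule integrable_const_bound[where B = 1])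
  have "\<bar>1 - thresh_factor lam x\<bar> \<le> 1" for x :: 'd
    using thresh_factor_nonneg[of lam x] thresh_factor_le_1[of lam x] by simp
  then show "AE \<omega> in M. norm (1 - thresh_factor lam (X \<omega>)) \<le> 1" by simp
qed measurable

lemma directional_variance_thresh_le:
  "(\<integral>\<omega>. (th \<bullet> (thresh lam (X \<omega>) - thresh_mean))\<^sup>2 \<partial>M)
    \<le> (\<integral>\<omega>. (th \<bullet> (X \<omega> - expectation X))\<^sup>2 \<partial>M)
      + expectation (\<lambda>\<omega>. 1 - thresh_factor lam (X \<omega>)) * (th \<bullet> expectation X)\<^sup>2"
proof -
  define m where "m = expectation X"
  define s where "s \<omega> = thresh_factor lam (X \<omega>)" for \<omega>
  have s: "0 \<le> s \<omega>" "s \<omega> \<le> 1" for \<omega>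
    using thresh_factor_nonneg[of lam "X \<omega>"] thresh_factor_le_1[of lam "X \<omega>"] by (auto simp: s_def)
  have int_s: "integrable M (\<lambda>\<omega>. 1 - s \<omega>)"
    unfolding s_def by (rule integrable_one_minus_thresh_factor)
  have int_inner_sq: "integrable M (\<lambda>\<omega>. (th \<bullet> (X \<omega> - m))\<^sup>2)"
    by (rule integrable_inner_sq[OF _ integrable_norm_diff_sq[OF X X_L2]]) measurable
  have int_thresh_inner_sq: "integrable M (\<lambda>\<omega>. (norm (th \<bullet> thresh lam (X \<omega>)))\<^sup>2)"
    using integrable_inner_sq[OF _ integrable_thresh_norm_sq, of th] by simp
  have "(\<integral>\<omega>. (th \<bullet> (thresh lam (X \<omega>) - thresh_mean))\<^sup>2 \<partial>M)
      = (\<integral>\<omega>. (norm (th \<bullet> thresh lam (X \<omega>) - expectation (\<lambda>\<omega>. th \<bullet> thresh lam (X \<omega>))))\<^sup>2 \<partial>M)"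
    using integrable_thresh by (simp add: inner_diff_right)
  also have "\<dots> \<le> (\<integral>\<omega>. (norm (th \<bullet> thresh lam (X \<omega>) - th \<bullet> m))\<^sup>2 \<partial>M)"
    by (rule integral_norm_diff_expectation_sq_le[OF _ int_thresh_inner_sq]) measurable
  also have "\<dots> \<le> (\<integral>\<omega>. (th \<bullet> (X \<omega> - m))\<^sup>2 + (1 - s \<omega>) * (th \<bullet> m)\<^sup>2 \<partial>M)"
  proof (rule integral_mono)
    show "integrable M (\<lambda>\<omega>. (norm (th \<bullet> thresh lam (X \<omega>) - th \<bullet> m))\<^sup>2)"
      by (rule integrable_norm_diff_sq[OF _ int_thresh_inner_sq]) measurable
    show "integrable M (\<lambda>\<omega>. (th \<bullet> (X \<omega> - m))\<^sup>2 + (1 - s \<omega>) * (th \<bullet> m)\<^sup>2)"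
      using int_inner_sq int_s by simp
    fix \<omega>
    have "th \<bullet> thresh lam (X \<omega>) - th \<bullet> m = s \<omega> * (th \<bullet> (X \<omega> - m)) - (1 - s \<omega>) * (th \<bullet> m)"
      by (simp add: s_def thresh_eq_scaleR[OF lam] inner_diff_right algebra_simps)
    with power2_diff_mult_le[OF s] show "(norm (th \<bullet> thresh lam (X \<omega>) - th \<bullet> m))\<^sup>2 \<le> (th \<bullet> (X \<omega> - m))\<^sup>2 + (1 - s \<omega>) * (th \<bullet> m)\<^sup>2"
      by simp
  qed
  also have "\<dots> = (\<integral>\<omega>. (th \<bullet> (X \<omega> - m))\<^sup>2 \<partial>M) + expectation (\<lambda>\<omega>. 1 - s \<omega>) * (th \<bullet> m)\<^sup>2"
    using int_inner_sq int_s by simp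
  finally show ?thesis by (simp add: m_def s_def)
qed

lemma integrable_one_minus_thresh_factor_mult_neg_part:
  "integrable M (\<lambda>\<omega>. (1 - thresh_factor lam (X \<omega>)) * neg_part (th \<bullet> (X \<omega> - c)))"
proof (rule Bochner_Integration.integrable_bound)
  show "integrable M (\<lambda>\<omega>. norm th * (norm (X \<omega>) + norm c))"
    using integrable_X by simp
  have "\<bar>(1 - thresh_factor lam x) * neg_part (th \<bullet> (x - c))\<bar> \<le> norm th * (norm x + norm c)" for x
  proof -
    have "\<bar>(1 - thresh_factor lam x) * neg_part (th \<bullet> (x - c))\<bar> \<le> 1 * \<bar>th \<bullet> (x - c)\<bar>"
      using thresh_factor_nonneg[of lam x] thresh_factor_le_1[of lam x]
      unfolding abs_mult neg_part_def by (intro mult_mono) auto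
    also have "\<dots> \<le> norm th * (norm x + norm c)"
      using Cauchy_Schwarz_ineq2[of th "x - c"] norm_triangle_ineq4[of x c]
      by (simp add: order_trans mult_left_mono)
    finally show ?thesis .
  qed
  then show "AE \<omega> in M. norm ((1 - thresh_factor lam (X \<omega>)) * neg_part (th \<bullet> (X \<omega> - c)))
      \<le> norm (norm th * (norm (X \<omega>) + norm c))"
    by simp
qed measurable

lemma thresh_mean_bias_le:
  "th \<bullet> thresh_mean - th \<bullet> expectation X
    \<le> expectation (\<lambda>\<omega>. (1 - thresh_factor lam (X \<omega>)) * neg_part (th \<bullet> (X \<omega> - expectation X)))
      + expectation (\<lambda>\<omega>. 1 - thresh_factor lam (X \<omega>)) * neg_part (th \<bullet> expectation X)"
proof -
  define m where "m = expectation X"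
  define r where "r \<omega> = 1 - thresh_factor lam (X \<omega>)" for \<omega>
  have r: "0 \<le> r \<omega>" for \<omega>
    using thresh_factor_le_1 by (simp add: r_def)
  have "th \<bullet> thresh_mean - th \<bullet> m = expectation (\<lambda>\<omega>. th \<bullet> thresh lam (X \<omega>) - th \<bullet> X \<omega>)"
    using integrable_thresh integrable_X by (simp add: m_def)
  also have "\<dots> \<le> expectation (\<lambda>\<omega>. r \<omega> * neg_part (th \<bullet> (X \<omega> - m)) + r \<omega> * neg_part (th \<bullet> m))"
  proof (rule integral_mono)
    show "integrable M (\<lambda>\<omega>. th \<bullet> thresh lam (X \<omega>) - th \<bullet> X \<omega>)"
      using integrable_thresh integrable_X by simp
    show "integrable M (\<lambda>\<omega>. r \<omega> * neg_part (th \<bullet> (X \<omega> - m)) + r \<omega> * neg_part (th \<bullet> m))"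
      using integrable_one_minus_thresh_factor_mult_neg_part integrable_one_minus_thresh_factor
      by (simp add: r_def)
    fix \<omega>
    have "th \<bullet> thresh lam (X \<omega>) - th \<bullet> X \<omega> = - (r \<omega> * (th \<bullet> (X \<omega> - m))) - r \<omega> * (th \<bullet> m)"
      by (simp add: r_def thresh_eq_scaleR[OF lam] inner_diff_right algebra_simps)
    then show "th \<bullet> thresh lam (X \<omega>) - th \<bullet> X \<omega> \<le> r \<omega> * neg_part (th \<bullet> (X \<omega> - m)) + r \<omega> * neg_part (th \<bullet> m)"
      using neg_mult_le_mult_neg_part[OF r, of \<omega> "th \<bullet> (X \<omega> - m)"]
        neg_mult_le_mult_neg_part[OF r, of \<omega> "th \<bullet> m"] by linarith
  qed
  also have "\<dots> = expectation (\<lambda>\<omega>. r \<omega> * neg_part (th \<bullet> (X \<omega> - m))) + expectation r * neg_part (th \<bullet> m)"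
    using integrable_one_minus_thresh_factor_mult_neg_part integrable_one_minus_thresh_factor
    by (simp add: r_def[abs_def])
  finally show ?thesis by (simp add: m_def r_def[abs_def])
qed

lemma ereal_expectation_one_minus_thresh_factor_mult_neg_part_le_INF:
  assumes P: "P \<subseteq> {0<..}"
  shows "ereal (expectation (\<lambda>\<omega>. (1 - thresh_factor lam (X \<omega>)) * neg_part (th \<bullet> (X \<omega> - c))))
    \<le> (INF p\<in>P. ereal (lam powr p / (p + 1) * (p / (p + 1)) powr p)
          * enn2ereal (\<integral>\<^sup>+ \<omega>. ennreal (norm (X \<omega>) powr p * neg_part (th \<bullet> (X \<omega> - c))) \<partial>M))"
proof (rule INF_greatest)
  fix p assume "p \<in> P"
  with P have p: "p > 0" by auto
  show "ereal (expectation (\<lambda>\<omega>. (1 - thresh_factor lam (X \<omega>)) * neg_part (th \<bullet> (X \<omega> - c))))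
    \<le> ereal (lam powr p / (p + 1) * (p / (p + 1)) powr p)
          * enn2ereal (\<integral>\<^sup>+ \<omega>. ennreal (norm (X \<omega>) powr p * neg_part (th \<bullet> (X \<omega> - c))) \<partial>M)"
  proof (rule ereal_integral_le_mult_nn_integral[OF integrable_one_minus_thresh_factor_mult_neg_part])
    fix \<omega>
    show "(1 - thresh_factor lam (X \<omega>)) * neg_part (th \<bullet> (X \<omega> - c))
        \<le> lam powr p / (p + 1) * (p / (p + 1)) powr p * (norm (X \<omega>) powr p * neg_part (th \<bullet> (X \<omega> - c)))"
      using mult_right_mono[OF one_minus_thresh_factor_le[OF lam p] neg_part_nonneg]
      by (simp add: mult.assoc)
  qed (use p in \<open>auto intro!: mult_nonneg_nonneg simp: thresh_factor_le_1 neg_part_nonneg\<close>)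
qed

lemma ereal_expectation_one_minus_thresh_factor_mult_le_INF:
  assumes P: "P \<subseteq> {0<..}" and q: "q \<ge> 0"
  shows "ereal (expectation (\<lambda>\<omega>. 1 - thresh_factor lam (X \<omega>)) * q)
    \<le> (INF p\<in>P. ereal (lam powr p / (p + 1) * (p / (p + 1)) powr p)
          * enn2ereal (\<integral>\<^sup>+ \<omega>. ennreal (norm (X \<omega>) powr p) \<partial>M) * ereal q)"
proof (rule INF_greatest)
  fix p assume "p \<in> P"
  with P have p: "p > 0" by auto
  have "ereal (expectation (\<lambda>\<omega>. 1 - thresh_factor lam (X \<omega>)))
      \<le> ereal (lam powr p / (p + 1) * (p / (p + 1)) powr p) * enn2ereal (\<integral>\<^sup>+ \<omega>. ennreal (norm (X \<omega>) powr p) \<partial>M)"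
    by (rule ereal_integral_le_mult_nn_integral[OF integrable_one_minus_thresh_factor])
      (use p thresh_factor_le_1 one_minus_thresh_factor_le[OF lam p] in auto)
  then show "ereal (expectation (\<lambda>\<omega>. 1 - thresh_factor lam (X \<omega>)) * q)
      \<le> ereal (lam powr p / (p + 1) * (p / (p + 1)) powr p)
          * enn2ereal (\<integral>\<^sup>+ \<omega>. ennreal (norm (X \<omega>) powr p) \<partial>M) * ereal q"
    using ereal_mult_right_mono[of _ _ "ereal q"] q by fastforce
qed

lemma ereal_inner_diff_expectation_le:
  assumes dev: "th \<bullet> (y - thresh_mean)
      \<le> \<alpha> * expectation (\<lambda>\<omega>. (th \<bullet> (thresh lam (X \<omega>) - thresh_mean))\<^sup>2)
        + \<gamma> * expectation (\<lambda>\<omega>. (norm (thresh lam (X \<omega>) - thresh_mean))\<^sup>2) + T"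
    and \<alpha>: "\<alpha> \<ge> 0" and \<gamma>: "\<gamma> \<ge> 0" and P: "P \<subseteq> {0<..}" and Q: "Q \<subseteq> {0<..}"
  shows "ereal (th \<bullet> (y - expectation X))
    \<le> ereal (\<alpha> * expectation (\<lambda>\<omega>. (th \<bullet> (X \<omega> - expectation X))\<^sup>2)
             + \<gamma> * expectation (\<lambda>\<omega>. (norm (X \<omega> - expectation X))\<^sup>2) + T)
      + (INF p\<in>P. ereal (lam powr p / (p + 1) * (p / (p + 1)) powr p)
           * enn2ereal (\<integral>\<^sup>+ \<omega>. ennreal (norm (X \<omega>) powr p * neg_part (th \<bullet> (X \<omega> - expectation X))) \<partial>M))
      + (INF p\<in>Q. ereal (lam powr p / (p + 1) * (p / (p + 1)) powr p)
           * enn2ereal (\<integral>\<^sup>+ \<omega>. ennreal (norm (X \<omega>) powr p) \<partial>M)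
           * ereal (neg_part (th \<bullet> expectation X) + \<alpha> * (th \<bullet> expectation X)\<^sup>2))"
    (is "ereal ?lhs \<le> ereal ?R + ?INF1 + ?INF2")
proof -
  define m where "m = expectation X"
  define shrink where "shrink = expectation (\<lambda>\<omega>. 1 - thresh_factor lam (X \<omega>))"
  define bias where "bias = expectation (\<lambda>\<omega>. (1 - thresh_factor lam (X \<omega>)) * neg_part (th \<bullet> (X \<omega> - m)))"
  have "?lhs \<le> ?R + bias + shrink * (neg_part (th \<bullet> m) + \<alpha> * (th \<bullet> m)\<^sup>2)"
    using dev thresh_mean_bias_le[of th]
      mult_left_mono[OF directional_variance_thresh_le[of th] \<alpha>]
      mult_left_mono[OF variance_thresh_le \<gamma>]
    by (simp add: shrink_def bias_def m_def inner_diff_right algebra_simps)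
  then have "ereal ?lhs \<le> ereal ?R + ereal bias + ereal (shrink * (neg_part (th \<bullet> m) + \<alpha> * (th \<bullet> m)\<^sup>2))"
    by simp
  also have "\<dots> \<le> ereal ?R + ?INF1 + ?INF2"
    using \<alpha> P Q unfolding shrink_def bias_def m_def
    by (intro add_mono order_refl ereal_expectation_one_minus_thresh_factor_mult_neg_part_le_INF
        ereal_expectation_one_minus_thresh_factor_mult_le_INF) (auto simp: neg_part_nonneg)
  finally show ?thesis .
qed

lemma norm_scaled_thresh_diff_le:
  assumes mu: "mu \<ge> 0"
  shows "norm ((mu * lam) *\<^sub>R (thresh lam x - thresh_mean)) \<le> 2 * mu"
proof -
  have "norm (thresh lam x - thresh_mean) \<le> 1 / lam + 1 / lam"
    using norm_triangle_ineq4[of "thresh lam x" thresh_mean] norm_thresh_le[OF lam, of x]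
      norm_expectation_thresh_le by linarith
  then have "mu * lam * norm (thresh lam x - thresh_mean) \<le> mu * lam * (2 / lam)"
    using mu lam by (intro mult_left_mono) auto
  then show ?thesis using mu lam by simp
qed

lemma expectation_exp_scaled_thresh_le:
  assumes mu: "mu > 0" and bt: "beta > 0" and th: "norm th \<le> 1"
    and b: "b \<ge> exp (2 * mu) * g1 (2 * mu\<^sup>2 / beta)"
  shows "expectation (\<lambda>\<omega>. exp (th \<bullet> ((mu * lam) *\<^sub>R (thresh lam (X \<omega>) - thresh_mean))
            + (norm ((mu * lam) *\<^sub>R (thresh lam (X \<omega>) - thresh_mean)))\<^sup>2 / (2 * beta)))
    \<le> 1 + g2 (2 * mu) * (mu * lam)\<^sup>2 / 2 * expectation (\<lambda>\<omega>. (th \<bullet> (thresh lam (X \<omega>) - thresh_mean))\<^sup>2)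
        + b * (mu * lam)\<^sup>2 / (2 * beta) * expectation (\<lambda>\<omega>. (norm (thresh lam (X \<omega>) - thresh_mean))\<^sup>2)"
proof -
  define W where "W = (\<lambda>\<omega>. (mu * lam) *\<^sub>R (thresh lam (X \<omega>) - thresh_mean))"
  have W [measurable]: "W \<in> borel_measurable M" unfolding W_def by measurable
  have "expectation W = 0"
    using integrable_thresh by (simp add: W_def prob_space)
  moreover have "b \<ge> exp (2 * mu) * g1 ((2 * mu)\<^sup>2 / (2 * beta))"
    using b by (simp add: power2_eq_square)
  ultimately have "expectation (\<lambda>\<omega>. exp (th \<bullet> W \<omega> + (norm (W \<omega>))\<^sup>2 / (2 * beta)))
      \<le> 1 + g2 (2 * mu) / 2 * expectation (\<lambda>\<omega>. (th \<bullet> W \<omega>)\<^sup>2)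
          + b / (2 * beta) * expectation (\<lambda>\<omega>. (norm (W \<omega>))\<^sup>2)"
    using mu bt th norm_scaled_thresh_diff_le[of mu]
    by (intro expectation_exp_le_variances[OF W]) (auto simp: W_def)
  then show ?thesis
    using mu lam by (simp add: W_def power_mult_distrib)
qed

lemma thresh_sample_mean_deviation:
  fixes Xs :: "'i \<Rightarrow> 'a \<Rightarrow> 'd"
  assumes I: "finite I" "I \<noteq> {}"
    and Xs [measurable]: "\<And>i. i \<in> I \<Longrightarrow> Xs i \<in> borel_measurable M"
    and Xs_distr: "\<And>i. i \<in> I \<Longrightarrow> distr M borel (Xs i) = distr M borel X"
    and Xs_indep: "indep_vars (\<lambda>_. borel) Xs I"
    and mu: "mu > 0" and bt: "beta > 0" and delta: "delta > 0"
    and b: "b \<ge> exp (2 * mu) * g1 (2 * mu\<^sup>2 / beta)"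
  shows "\<exists>A \<in> events. prob A \<ge> 1 - delta \<and> (\<forall>\<omega> \<in> A. \<forall>th. norm th = 1 \<longrightarrow>
    th \<bullet> ((1 / real (card I)) *\<^sub>R (\<Sum>i\<in>I. thresh lam (Xs i \<omega>)) - thresh_mean)
    \<le> g2 (2 * mu) * mu * lam / 2 * expectation (\<lambda>\<omega>. (th \<bullet> (thresh lam (X \<omega>) - thresh_mean))\<^sup>2)
      + b * mu * lam / (2 * beta) * expectation (\<lambda>\<omega>. (norm (thresh lam (X \<omega>) - thresh_mean))\<^sup>2)
      + (beta + 2 * ln (1 / delta)) / (2 * mu * lam * real (card I)))"
proof -
  define f where "f x = (mu * lam) *\<^sub>R (thresh lam x - thresh_mean)" for x
  have f [measurable]: "f \<in> borel_measurable borel" unfolding f_def by measurable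
  have f_bnd: "norm (f x) \<le> 2 * mu" for x
    using norm_scaled_thresh_diff_le mu by (simp add: f_def)
  obtain A where A: "A \<in> events" "prob A \<ge> 1 - delta"
    and pac: "\<And>\<omega> th. \<omega> \<in> A \<Longrightarrow> (\<Sum>i\<in>I. th \<bullet> f (Xs i \<omega>)) \<le>
        real (card I) * (expectation (\<lambda>\<omega>'. exp (th \<bullet> f (X \<omega>') + (norm (f (X \<omega>')))\<^sup>2 / (2 * beta))) - 1)
        + beta / 2 * (norm th)\<^sup>2 + ln (1 / delta)"
    using pac_bayes_gauss[OF I(1) X Xs Xs_distr Xs_indep f f_bnd bt delta] by blast
  have "th \<bullet> ((1 / real (card I)) *\<^sub>R (\<Sum>i\<in>I. thresh lam (Xs i \<omega>)) - thresh_mean)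
    \<le> g2 (2 * mu) * mu * lam / 2 * expectation (\<lambda>\<omega>. (th \<bullet> (thresh lam (X \<omega>) - thresh_mean))\<^sup>2)
      + b * mu * lam / (2 * beta) * expectation (\<lambda>\<omega>. (norm (thresh lam (X \<omega>) - thresh_mean))\<^sup>2)
      + (beta + 2 * ln (1 / delta)) / (2 * mu * lam * real (card I))"
    (is "?t \<le> ?a * ?V1 + ?b * ?V2 + ?T")
    if \<omega>: "\<omega> \<in> A" and th: "norm th = 1" for \<omega> th
  proof -
    define N where "N = real (card I)"
    define S where "S = (\<Sum>i\<in>I. th \<bullet> thresh lam (Xs i \<omega>))"
    define E where "E = expectation (\<lambda>\<omega>'. exp (th \<bullet> f (X \<omega>') + (norm (f (X \<omega>')))\<^sup>2 / (2 * beta)))"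
    define V1 where "V1 = ?V1"
    define V2 where "V2 = ?V2"
    define L where "L = ln (1 / delta)"
    have N: "N > 0" using I by (simp add: N_def card_gt_0_iff)
    have t: "?t = S / N - th \<bullet> thresh_mean"
      by (simp add: S_def N_def inner_diff_right inner_sum_right sum_divide_distrib)
    have "(\<Sum>i\<in>I. th \<bullet> f (Xs i \<omega>)) = mu * lam * (S - N * (th \<bullet> thresh_mean))"
      by (simp add: f_def S_def N_def inner_diff_right sum_subtractf sum_distrib_left[symmetric])
    then have "mu * lam * (S - N * (th \<bullet> thresh_mean)) \<le> N * (E - 1) + beta / 2 + L"
      using pac[OF \<omega>, of th] th by (simp add: N_def E_def L_def)
    moreover have "E \<le> 1 + g2 (2 * mu) * (mu * lam)\<^sup>2 / 2 * V1 + b * (mu * lam)\<^sup>2 / (2 * beta) * V2"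
      unfolding E_def V1_def V2_def f_def using th by (intro expectation_exp_scaled_thresh_le[OF mu bt _ b]) simp
    then have "N * (E - 1) \<le> N * (g2 (2 * mu) * (mu * lam)\<^sup>2 / 2 * V1 + b * (mu * lam)\<^sup>2 / (2 * beta) * V2)"
      using N by (intro mult_left_mono) auto
    ultimately have le: "mu * lam * (S - N * (th \<bullet> thresh_mean))
        \<le> N * (g2 (2 * mu) * (mu * lam)\<^sup>2 / 2 * V1 + b * (mu * lam)\<^sup>2 / (2 * beta) * V2) + beta / 2 + L"
      by linarith
    have "mu * lam * N * ?t = mu * lam * (S - N * (th \<bullet> thresh_mean))"
      using N by (simp add: t field_simps)
    also note le
    also have "N * (g2 (2 * mu) * (mu * lam)\<^sup>2 / 2 * V1 + b * (mu * lam)\<^sup>2 / (2 * beta) * V2) + beta / 2 + L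
        = mu * lam * N * (?a * V1 + ?b * V2 + ?T)"
      using mu lam bt N by (simp add: N_def L_def field_simps power2_eq_square)
    finally show ?thesis
      using mu lam N by (simp add: V1_def V2_def mult_le_cancel_left_pos)
  qed
  with A show ?thesis by blast
qed

end

theorem mainTheorem3:
  fixes M :: "'w measure" and X :: "'w \<Rightarrow> 'd::euclidean_space"
    and Xs :: "nat \<Rightarrow> 'w \<Rightarrow> 'd" and n :: nat
    and lam mu beta delta a b :: real
  assumes "prob_space M"
    and X_rv: "X \<in> borel_measurable M"
    and X_L2: "integrable M (\<lambda>\<omega>. (norm (X \<omega>))\<^sup>2)"
    and n_pos: "n \<ge> 1"
    and Xs_rv: "\<And>i. i \<in> {1..n} \<Longrightarrow> Xs i \<in> borel_measurable M"
    and Xs_distr: "\<And>i. i \<in> {1..n} \<Longrightarrow> distr M borel (Xs i) = distr M borel X"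
    and Xs_indep: "prob_space.indep_vars M (\<lambda>_. borel) Xs {1..n}"
    and "lam > 0" and "mu > 0" and "beta > 0"
    and "0 < delta" and "delta < 1"
    and a_def: "a = g2 (2 * mu)"
    and b_ge: "b \<ge> exp (2 * mu) * g1 (2 * mu\<^sup>2 / beta)"
  shows "\<exists>A \<in> sets M. measure M A \<ge> 1 - delta \<and>
    (\<forall>\<omega> \<in> A. \<forall>\<theta>::'d. norm \<theta> = 1 \<longrightarrow>
      (let m = integral\<^sup>L M X;
           mhat = (1 / real n) *\<^sub>R (\<Sum>i\<in>{1..n}. thresh lam (Xs i \<omega>))
       in ereal (\<theta> \<bullet> (mhat - m)) \<le>
          ereal (a * mu * lam / 2 * integral\<^sup>L M (\<lambda>\<omega>'. (\<theta> \<bullet> (X \<omega>' - m))\<^sup>2)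
                 + b * mu * lam / (2 * beta) * integral\<^sup>L M (\<lambda>\<omega>'. (norm (X \<omega>' - m))\<^sup>2)
                 + (beta + 2 * ln (1 / delta)) / (2 * mu * lam * real n))
          + (INF p\<in>{1::real..}. ereal (lam powr p / (p + 1) * (p / (p + 1)) powr p)
               * enn2ereal (\<integral>\<^sup>+ \<omega>'. ennreal (norm (X \<omega>') powr p
                                     * neg_part (\<theta> \<bullet> (X \<omega>' - m))) \<partial>M))
          + (INF p\<in>{2::real..}. ereal (lam powr p / (p + 1) * (p / (p + 1)) powr p)
               * enn2ereal (\<integral>\<^sup>+ \<omega>'. ennreal (norm (X \<omega>') powr p) \<partial>M)
               * ereal (neg_part (\<theta> \<bullet> m) + a * mu * lam / 2 * (\<theta> \<bullet> m)\<^sup>2))))"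
proof -
  interpret thresholded_sample M X lam
    using assms(1) X_rv X_L2 \<open>lam > 0\<close> by (simp add: thresholded_sample_def thresholded_sample_axioms_def)
  have I: "finite {1..n}" "{1..n} \<noteq> {}" and card: "card {1..n} = n" using n_pos by auto
  obtain A where A: "A \<in> events" "prob A \<ge> 1 - delta"
    and deviation: "\<And>\<omega> th. \<omega> \<in> A \<Longrightarrow> norm th = 1 \<Longrightarrow>
      th \<bullet> ((1 / real n) *\<^sub>R (\<Sum>i\<in>{1..n}. thresh lam (Xs i \<omega>)) - thresh_mean)
      \<le> a * mu * lam / 2 * expectation (\<lambda>\<omega>. (th \<bullet> (thresh lam (X \<omega>) - thresh_mean))\<^sup>2)
        + b * mu * lam / (2 * beta) * expectation (\<lambda>\<omega>. (norm (thresh lam (X \<omega>) - thresh_mean))\<^sup>2)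
        + (beta + 2 * ln (1 / delta)) / (2 * mu * lam * real n)"
    using thresh_sample_mean_deviation[OF I Xs_rv Xs_distr Xs_indep \<open>mu > 0\<close> \<open>beta > 0\<close>
        \<open>delta > 0\<close> b_ge, unfolded card a_def[symmetric]]
    by blast
  have a: "a * mu * lam / 2 \<ge> 0"
    using g2_ge_1[of "2 * mu"] assms a_def by simp
  have "b \<ge> 0"
    using b_ge mult_nonneg_nonneg[OF exp_ge_zero g1_nonneg] by (meson order_trans)
  then have b: "b * mu * lam / (2 * beta) \<ge> 0"
    using assms by simp
  have P: "{1::real..} \<subseteq> {0<..}" "{2::real..} \<subseteq> {0<..}" by auto
  show ?thesis
    using A deviation ereal_inner_diff_expectation_le[OF deviation a b P] unfolding Let_def by blast
qed

end
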